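(* Let $\{\mathcal{L}_\gamma\}$ be a family of scale-invariant functions $\mathbb{R}^d\to\mathbb{R}$ ($\mathcal{L}_\gamma(cx)=\mathcal{L}_\gamma(x)$ for all $c>0$, $x\ne0$) indexed by a random data point $\gamma$, $\mathcal{L}=\mathbb{E}\mathcal{L}_\gamma$, and $\lambda>0$. For batch size $B$ and learning rate $\eta$, consider SGD with weight decay $x_{k+1}=x_k-\eta\nabla(\mathcal{L}_{\mathcal{B}_k}(x_k)+\frac\lambda2|x_k|^2)$, where $\mathcal{L}_{\mathcal{B}_k}$ is the average of $\mathcal{L}_\gamma$ over an independent mini-batch of $B$ samples, so that its gradient-noise covariance $\Sigma^B(x)$ satisfies $\Sigma^B(x)=\kappa\Sigma^{\kappa B}(x)$. Assume the limits $R^{B,\eta}_\infty=\lim_t\mathbb{E}|x_t|^2$, $G^{B,\eta}_\infty=\lim_t\mathbb{E}|\nabla\mathcal{L}(x_t)|^2$, $N^{B,\eta}_\infty=\lim_t\mathbb{E}\,\mathrm{Tr}[\Sigma^B(x_t)]$ exist for the relevant $(B,\eta)$. Then for any $B,\eta,C$ and $$\kappa>C^2\Big(1+\frac{N_\infty^{B,\eta}}{G_\infty^{B,\eta}}\Big),$$ SGD with batch size $B$ and learning rate $\eta$ does not exhibit $(C,\kappa)$-Linear Scaling Invariance.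
   Context: SGD with batch size $B$ and LR $\eta$ exhibits $(C,\kappa)$-Linear Scaling Invariance if, for a constant $C$ with $0<C<\sqrt\kappa$, $\frac1C\le\frac{R_\infty^{B,\eta}}{R_\infty^{\kappa B,\kappa\eta}},\ \frac{N_\infty^{B,\eta}}{\kappa N_\infty^{\kappa B,\kappa\eta}},\ \frac{G_\infty^{B,\eta}}{G_\infty^{\kappa B,\kappa\eta}}\le C.$ *)

theory Defs
  imports "HOL-Probability.Probability"
begin

text \<open>L :: 'g => 'a => real is the family of per-sample losses, gL its gradient
(in the parameter), L = E L_gamma is the full loss.\<close>

definition batch_space :: "'g measure \<Rightarrow> nat \<Rightarrow> (nat \<Rightarrow> 'g) measure" where
  "batch_space D B = PiM {..<B} (\<lambda>_. D)"

definition sgd_space :: "'g measure \<Rightarrow> nat \<Rightarrow> (nat \<Rightarrow> nat \<Rightarrow> 'g) measure" where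
  "sgd_space D B = PiM UNIV (\<lambda>_::nat. batch_space D B)"

definition batch_grad :: "('g \<Rightarrow> 'a \<Rightarrow> 'a::euclidean_space) \<Rightarrow> nat \<Rightarrow> (nat \<Rightarrow> 'g) \<Rightarrow> 'a \<Rightarrow> 'a" where
  "batch_grad gL B b x = (1 / real B) *\<^sub>R (\<Sum>i<B. gL (b i) x)"

definition full_grad :: "'g measure \<Rightarrow> ('g \<Rightarrow> 'a \<Rightarrow> 'a::euclidean_space) \<Rightarrow> 'a \<Rightarrow> 'a" where
  "full_grad D gL x = (\<integral>\<gamma>. gL \<gamma> x \<partial>D)"

definition trSigma :: "'g measure \<Rightarrow> ('g \<Rightarrow> 'a \<Rightarrow> 'a::euclidean_space) \<Rightarrow> nat \<Rightarrow> 'a \<Rightarrow> real" where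
  "trSigma D gL B x =
     (\<integral>b. (norm (batch_grad gL B b x - (\<integral>b'. batch_grad gL B b' x \<partial>batch_space D B)))\<^sup>2
        \<partial>batch_space D B)"

primrec sgd :: "('g \<Rightarrow> 'a \<Rightarrow> 'a::euclidean_space) \<Rightarrow> real \<Rightarrow> 'a \<Rightarrow> nat \<Rightarrow> real
                \<Rightarrow> (nat \<Rightarrow> nat \<Rightarrow> 'g) \<Rightarrow> nat \<Rightarrow> 'a" where
  "sgd gL lam x0 B eta \<omega> 0 = x0"
| "sgd gL lam x0 B eta \<omega> (Suc k) =
     sgd gL lam x0 B eta \<omega> k
       - eta *\<^sub>R (batch_grad gL B (\<omega> k) (sgd gL lam x0 B eta \<omega> k)
                   + lam *\<^sub>R sgd gL lam x0 B eta \<omega> k)"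

definition R_seq where
  "R_seq D gL lam x0 B eta t = (\<integral>\<omega>. (norm (sgd gL lam x0 B eta \<omega> t))\<^sup>2 \<partial>sgd_space D B)"
definition G_seq where
  "G_seq D gL lam x0 B eta t =
     (\<integral>\<omega>. (norm (full_grad D gL (sgd gL lam x0 B eta \<omega> t)))\<^sup>2 \<partial>sgd_space D B)"
definition N_seq where
  "N_seq D gL lam x0 B eta t =
     (\<integral>\<omega>. trSigma D gL B (sgd gL lam x0 B eta \<omega> t) \<partial>sgd_space D B)"

definition R_inf where "R_inf D gL lam x0 B eta = lim (R_seq D gL lam x0 B eta)"
definition G_inf where "G_inf D gL lam x0 B eta = lim (G_seq D gL lam x0 B eta)"
definition N_inf where "N_inf D gL lam x0 B eta = lim (N_seq D gL lam x0 B eta)"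

definition limits_exist where
  "limits_exist D gL lam x0 B eta \<longleftrightarrow>
     (\<forall>t. integrable (sgd_space D B) (\<lambda>\<omega>. (norm (sgd gL lam x0 B eta \<omega> t))\<^sup>2)
        \<and> integrable (sgd_space D B) (\<lambda>\<omega>. (norm (full_grad D gL (sgd gL lam x0 B eta \<omega> t)))\<^sup>2)
        \<and> integrable (sgd_space D B) (\<lambda>\<omega>. trSigma D gL B (sgd gL lam x0 B eta \<omega> t)))
   \<and> convergent (R_seq D gL lam x0 B eta)
   \<and> convergent (G_seq D gL lam x0 B eta)
   \<and> convergent (N_seq D gL lam x0 B eta)"

definition LSI where
  "LSI D gL lam x0 C \<kappa> B eta \<longleftrightarrow>
     0 < C \<and> C < sqrt \<kappa> \<and>
     (\<exists>Bk::nat. real Bk = \<kappa> * real B \<and>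
        (let R1 = R_inf D gL lam x0 B eta; R2 = R_inf D gL lam x0 Bk (\<kappa> * eta);
             N1 = N_inf D gL lam x0 B eta; N2 = N_inf D gL lam x0 Bk (\<kappa> * eta);
             G1 = G_inf D gL lam x0 B eta; G2 = G_inf D gL lam x0 Bk (\<kappa> * eta)
         in 1 / C \<le> R1 / R2 \<and> R1 / R2 \<le> C
          \<and> 1 / C \<le> N1 / (\<kappa> * N2) \<and> N1 / (\<kappa> * N2) \<le> C
          \<and> 1 / C \<le> G1 / G2 \<and> G1 / G2 \<le> C))"

end

theory Submission
  imports Defs
begin

text \<open>Scale invariance makes every per-sample gradient orthogonal to its argument, so one SGD
step with weight decay satisfies
  |x_{k+1}|^2 = (1 - eta lam)^2 |x_k|^2 + eta^2 |g_k|^2,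
and since the mini-batch B_k is independent of x_k, E|g_k|^2 = E|nabla L(x_k)|^2 + E Tr Sigma^B(x_k).
Passing to the limit gives the equilibrium identity lam (2 - eta lam) R = eta (G + N) for every
run. Comparing the runs (B, eta) and (kappa B, kappa eta) through the identity, the
Linear Scaling Invariance bounds on R, G and N force kappa G <= C^2 (G + N).\<close>

lemma scale_invariant_gradient_orthogonal:
  fixes f :: "'a::real_inner \<Rightarrow> real"
  assumes scale_inv: "\<And>c. c > 0 \<Longrightarrow> f (c *\<^sub>R x) = f x"
    and grad: "GDERIV f x :> g"
  shows "inner x g = 0"
proof -
  have "((\<lambda>c::real. c *\<^sub>R x) has_derivative (\<lambda>c. c *\<^sub>R x)) (at 1)"
    by (auto intro!: derivative_eq_intros)
  moreover have "(f has_derivative (\<lambda>h. inner h g)) (at ((1::real) *\<^sub>R x))"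
    using grad unfolding gderiv_def by simp
  ultimately have "((\<lambda>c. f (c *\<^sub>R x)) has_derivative (\<lambda>c. inner x g * c)) (at 1)"
    using has_derivative_compose by (fastforce simp: mult.commute)
  then have "((\<lambda>c. f (c *\<^sub>R x)) has_field_derivative inner x g) (at 1)"
    by (simp add: has_field_derivative_def)
  then have "((\<lambda>c. f x) has_field_derivative inner x g) (at 1)"
    by (rule has_field_derivative_transform_within_open[where S="{0<..}"])
       (auto simp: scale_inv)
  then show ?thesis
    using DERIV_const DERIV_unique by blast
qed

lemma borel_measurable_case_prod_compose:
  assumes "(\<lambda>(\<gamma>, x). g \<gamma> x) \<in> borel_measurable (D \<Otimes>\<^sub>M borel)"
    and "f \<in> measurable N D" and "h \<in> borel_measurable N"
  shows "(\<lambda>\<omega>. g (f \<omega>) (h \<omega>)) \<in> borel_measurable N"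
  using measurable_compose[OF measurable_Pair[OF assms(2,3)] assms(1)] by simp

lemma (in prob_space) integral_norm_square_eq_mean_plus_variance:
  fixes X :: "'a \<Rightarrow> 'b::{real_inner, banach, second_countable_topology}"
  assumes X: "integrable M X" and X2: "integrable M (\<lambda>\<omega>. (norm (X \<omega>))\<^sup>2)"
  shows "expectation (\<lambda>\<omega>. (norm (X \<omega>))\<^sup>2)
           = (norm (expectation X))\<^sup>2 + expectation (\<lambda>\<omega>. (norm (X \<omega> - expectation X))\<^sup>2)"
proof -
  let ?m = "expectation X"
  have expand: "(norm (x - ?m))\<^sup>2 = (norm x)\<^sup>2 - 2 * inner x ?m + (norm ?m)\<^sup>2" for x
    by (simp add: power2_norm_eq_inner inner_diff_left inner_diff_right inner_commute)
  have "expectation (\<lambda>\<omega>. (norm (X \<omega> - ?m))\<^sup>2)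
        = expectation (\<lambda>\<omega>. (norm (X \<omega>))\<^sup>2) - 2 * inner ?m ?m + (norm ?m)\<^sup>2"
    unfolding expand using X X2 by (simp add: prob_space)
  then show ?thesis
    by (simp add: power2_norm_eq_inner)
qed

lemma prob_space_batch_space: "prob_space D \<Longrightarrow> prob_space (batch_space D B)"
  unfolding batch_space_def by (intro prob_space_PiM) auto

lemma measurable_batch_component: "i < B \<Longrightarrow> (\<lambda>b. b i) \<in> measurable (batch_space D B) D"
  unfolding batch_space_def by (intro measurable_component_singleton) auto

lemma
  fixes f :: "'g \<Rightarrow> 'b::{banach, second_countable_topology}"
  assumes "prob_space D" "i < B" "f \<in> borel_measurable D"
  shows integrable_batch_component_iff:
      "integrable (batch_space D B) (\<lambda>b. f (b i)) \<longleftrightarrow> integrable D f"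
    and integral_batch_component: "(\<integral>b. f (b i) \<partial>batch_space D B) = (\<integral>\<gamma>. f \<gamma> \<partial>D)"
proof -
  have distr: "distr (batch_space D B) D (\<lambda>b. b i) = D"
    unfolding batch_space_def using assms by (intro distr_PiM_component) auto
  show "integrable (batch_space D B) (\<lambda>b. f (b i)) \<longleftrightarrow> integrable D f"
    using integrable_distr_eq[OF measurable_batch_component[OF assms(2)] assms(3)] distr by simp
  show "(\<integral>b. f (b i) \<partial>batch_space D B) = (\<integral>\<gamma>. f \<gamma> \<partial>D)"
    using integral_distr[OF measurable_batch_component[OF assms(2)] assms(3)] distr by simp
qed

lemma norm_batch_grad_square_le:
  assumes "B > 0"
  shows "(norm (batch_grad gL B b x))\<^sup>2 \<le> (\<Sum>i<B. (norm (gL (b i) x))\<^sup>2) / real B"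
proof -
  have "(norm (batch_grad gL B b x))\<^sup>2 \<le> ((\<Sum>i<B. norm (gL (b i) x)) / real B)\<^sup>2"
    unfolding batch_grad_def
    by (intro power_mono) (auto intro!: divide_right_mono norm_sum)
  also have "\<dots> \<le> (\<Sum>i<B. (norm (gL (b i) x))\<^sup>2) * real B / (real B)\<^sup>2"
    using sum_squared_le_sum_of_squares[of "\<lambda>i. norm (gL (b i) x)" "{..<B}"]
    by (simp add: power_divide divide_right_mono)
  also have "\<dots> = (\<Sum>i<B. (norm (gL (b i) x))\<^sup>2) / real B"
    using assms by (simp add: power2_eq_square)
  finally show ?thesis .
qed

lemma sgd_cong:
  "(\<And>k. k < t \<Longrightarrow> \<omega> k = \<omega>' k) \<Longrightarrow> sgd gL lam x0 B eta \<omega> t = sgd gL lam x0 B eta \<omega>' t"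
  by (induction t) auto

lemma nn_integral_PiM_split_coordinate:
  assumes M: "prob_space M"
    and F: "F \<in> borel_measurable (PiM UNIV (\<lambda>_. M))"
  shows "(\<integral>\<^sup>+\<omega>. F \<omega> \<partial>PiM UNIV (\<lambda>_. M)) =
     (\<integral>\<^sup>+X. (\<integral>\<^sup>+x. F (X(t := x)) \<partial>M) \<partial>PiM (UNIV - {t}) (\<lambda>_. M))"
proof -
  let ?P = "PiM (UNIV - {t}) (\<lambda>_. M)" and ?S = "PiM UNIV (\<lambda>_. M)"
  interpret M: prob_space M by fact
  interpret P: prob_space ?P using M by (intro prob_space_PiM) auto
  interpret pair_sigma_finite M ?P by unfold_locales
  have "insert t (UNIV - {t}) = UNIV" by auto
  then have distr: "distr (M \<Otimes>\<^sub>M ?P) ?S (\<lambda>(x, X). X(t := x)) = ?S"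
    using distr_pair_PiM_eq_PiM[of "UNIV - {t}" "\<lambda>_. M" t] M by simp
  have "(\<lambda>p. (snd p)(t := fst p)) \<in> measurable (M \<Otimes>\<^sub>M ?P) ?S"
    by (rule measurable_fun_upd[where J="UNIV - {t}"]) auto
  then have upd: "(\<lambda>(x, X). X(t := x)) \<in> measurable (M \<Otimes>\<^sub>M ?P) ?S"
    by (simp add: case_prod_beta)
  have "(\<integral>\<^sup>+\<omega>. F \<omega> \<partial>?S) = (\<integral>\<^sup>+\<omega>. F \<omega> \<partial>distr (M \<Otimes>\<^sub>M ?P) ?S (\<lambda>(x, X). X(t := x)))"
    by (simp add: distr)
  also have "\<dots> = (\<integral>\<^sup>+p. F ((snd p)(t := fst p)) \<partial>(M \<Otimes>\<^sub>M ?P))"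
    using F by (subst nn_integral_distr[OF upd]) (simp_all add: case_prod_beta)
  also have "\<dots> = (\<integral>\<^sup>+X. (\<integral>\<^sup>+x. F (X(t := x)) \<partial>M) \<partial>?P)"
    using nn_integral_snd[of "\<lambda>p. F ((snd p)(t := fst p))"] measurable_compose[OF upd F]
    by (simp add: case_prod_beta)
  finally show ?thesis .
qed

lemma
  fixes f :: "'b \<Rightarrow> 'c \<Rightarrow> real"
  assumes M: "prob_space M"
    and f: "case_prod f \<in> borel_measurable (N \<Otimes>\<^sub>M M)"
    and f_nonneg: "\<And>y b. 0 \<le> f y b"
    and f_int: "\<And>y. integrable M (f y)"
    and X: "X \<in> measurable (PiM UNIV (\<lambda>_. M)) N"
    and X_fresh: "\<And>s x. X (s(t := x)) = X s"
    and int: "integrable (PiM UNIV (\<lambda>_. M)) (\<lambda>\<omega>. \<integral>b. f (X \<omega>) b \<partial>M)"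
  shows integrable_PiM_fresh_coordinate:
      "integrable (PiM UNIV (\<lambda>_. M)) (\<lambda>\<omega>. f (X \<omega>) (\<omega> t))"
    and integral_PiM_fresh_coordinate:
      "(\<integral>\<omega>. f (X \<omega>) (\<omega> t) \<partial>PiM UNIV (\<lambda>_. M))
         = (\<integral>\<omega>. (\<integral>b. f (X \<omega>) b \<partial>M) \<partial>PiM UNIV (\<lambda>_. M))"
proof -
  let ?S = "PiM UNIV (\<lambda>_. M)" and ?P = "PiM (UNIV - {t}) (\<lambda>_. M)"
  interpret M: prob_space M by fact
  have "(\<lambda>\<omega>. \<omega> t) \<in> measurable ?S M"
    by (rule measurable_component_singleton) simp
  from measurable_compose[OF measurable_Pair[OF X this] f]
  have F: "(\<lambda>\<omega>. f (X \<omega>) (\<omega> t)) \<in> borel_measurable ?S" by simp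
  have "(\<lambda>y. \<integral>\<^sup>+b. f y b \<partial>M) \<in> borel_measurable N"
    using f by (intro M.borel_measurable_nn_integral) (simp add: case_prod_beta')
  from measurable_compose[OF X this]
  have mean_meas: "(\<lambda>\<omega>. \<integral>\<^sup>+b. f (X \<omega>) b \<partial>M) \<in> borel_measurable ?S" .
  have nn_f: "(\<integral>\<^sup>+b. f y b \<partial>M) = ennreal (\<integral>b. f y b \<partial>M)" for y
    using f_int f_nonneg by (intro nn_integral_eq_integral) auto
  have "(\<integral>\<^sup>+\<omega>. f (X \<omega>) (\<omega> t) \<partial>?S) = (\<integral>\<^sup>+Y. (\<integral>\<^sup>+x. f (X Y) x \<partial>M) \<partial>?P)"
    using nn_integral_PiM_split_coordinate[OF M, of "\<lambda>\<omega>. ennreal (f (X \<omega>) (\<omega> t))" t] F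
    by (simp add: X_fresh)
  also have "\<dots> = (\<integral>\<^sup>+Y. (\<integral>\<^sup>+x. (\<integral>\<^sup>+b. f (X (Y(t := x))) b \<partial>M) \<partial>M) \<partial>?P)"
    by (simp add: X_fresh M.emeasure_space_1)
  also have "\<dots> = (\<integral>\<^sup>+\<omega>. (\<integral>\<^sup>+b. f (X \<omega>) b \<partial>M) \<partial>?S)"
    by (rule nn_integral_PiM_split_coordinate[OF M mean_meas, symmetric])
  also have "\<dots> = ennreal (\<integral>\<omega>. (\<integral>b. f (X \<omega>) b \<partial>M) \<partial>?S)"
    unfolding nn_f using int f_nonneg by (intro nn_integral_eq_integral) auto
  finally have nn: "(\<integral>\<^sup>+\<omega>. f (X \<omega>) (\<omega> t) \<partial>?S) = ennreal (\<integral>\<omega>. (\<integral>b. f (X \<omega>) b \<partial>M) \<partial>?S)" .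
  show int_F: "integrable ?S (\<lambda>\<omega>. f (X \<omega>) (\<omega> t))"
    by (rule integrableI_nn_integral_finite[OF F _ nn]) (simp add: f_nonneg)
  show "(\<integral>\<omega>. f (X \<omega>) (\<omega> t) \<partial>?S) = (\<integral>\<omega>. (\<integral>b. f (X \<omega>) b \<partial>M) \<partial>?S)"
    using nn nn_integral_eq_integral[OF int_F] f_nonneg
    by (simp add: integral_nonneg_AE)
qed

lemma norm_scaleR_diff_orthogonal_square:
  fixes x y :: "'a::real_inner"
  assumes "inner x y = 0"
  shows "(norm (a *\<^sub>R x - b *\<^sub>R y))\<^sup>2 = a\<^sup>2 * (norm x)\<^sup>2 + b\<^sup>2 * (norm y)\<^sup>2"
proof -
  have "(norm (a *\<^sub>R x - b *\<^sub>R y))\<^sup>2 = inner (a *\<^sub>R x - b *\<^sub>R y) (a *\<^sub>R x - b *\<^sub>R y)"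
    by (rule power2_norm_eq_inner)
  also have "\<dots> = a\<^sup>2 * inner x x + b\<^sup>2 * inner y y"
    using assms by (simp add: inner_diff_left inner_diff_right inner_commute power2_eq_square)
  finally show ?thesis
    by (simp add: power2_norm_eq_inner)
qed

lemma norm_sgd_Suc_square:
  assumes orth: "\<And>\<gamma> y. inner y (gL \<gamma> y) = 0"
  shows "(norm (sgd gL lam x0 B eta \<omega> (Suc t)))\<^sup>2
           = (1 - eta * lam)\<^sup>2 * (norm (sgd gL lam x0 B eta \<omega> t))\<^sup>2
             + eta\<^sup>2 * (norm (batch_grad gL B (\<omega> t) (sgd gL lam x0 B eta \<omega> t)))\<^sup>2"
proof -
  let ?x = "sgd gL lam x0 B eta \<omega> t"
  have "inner ?x (batch_grad gL B (\<omega> t) ?x) = 0"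
    unfolding batch_grad_def by (simp add: inner_sum_right orth)
  moreover have "sgd gL lam x0 B eta \<omega> (Suc t)
                   = (1 - eta * lam) *\<^sub>R ?x - eta *\<^sub>R batch_grad gL B (\<omega> t) ?x"
    by (simp add: algebra_simps)
  ultimately show ?thesis
    by (simp add: norm_scaleR_diff_orthogonal_square)
qed

context
  fixes D :: "'g measure" and gL :: "'g \<Rightarrow> 'a::euclidean_space \<Rightarrow> 'a"
  assumes D: "prob_space D"
    and meas: "(\<lambda>(\<gamma>, x). gL \<gamma> x) \<in> borel_measurable (D \<Otimes>\<^sub>M borel)"
    and sq_int: "\<And>x. integrable D (\<lambda>\<gamma>. (norm (gL \<gamma> x))\<^sup>2)"
begin

lemma borel_measurable_gL: "(\<lambda>\<gamma>. gL \<gamma> x) \<in> borel_measurable D"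
  using borel_measurable_case_prod_compose[OF meas measurable_ident_sets[OF refl] measurable_const]
  by simp

lemma integrable_gL: "integrable D (\<lambda>\<gamma>. gL \<gamma> x)"
proof -
  interpret prob_space D by (rule D)
  have "integrable D (\<lambda>\<gamma>. norm (gL \<gamma> x))"
  proof (rule square_integrable_imp_integrable[OF _ sq_int])
    show "(\<lambda>\<gamma>. norm (gL \<gamma> x)) \<in> borel_measurable D"
      using borel_measurable_gL by measurable
  qed
  then show ?thesis
    using integrable_norm_iff[OF borel_measurable_gL] by blast
qed

lemma borel_measurable_batch_grad:
  assumes "f \<in> measurable N (batch_space D B)" and "h \<in> borel_measurable N"
  shows "(\<lambda>\<omega>. batch_grad gL B (f \<omega>) (h \<omega>)) \<in> borel_measurable N"
proof -
  have "(\<lambda>\<omega>. gL (f \<omega> i) (h \<omega>)) \<in> borel_measurable N" if "i < B" for i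
    using measurable_compose[OF assms(1) measurable_batch_component[OF that]]
    by (intro borel_measurable_case_prod_compose[OF meas _ assms(2)]) simp
  then show ?thesis
    unfolding batch_grad_def by (intro borel_measurable_scaleR borel_measurable_sum) auto
qed

lemma
  assumes B: "B > 0"
  shows integrable_batch_grad: "integrable (batch_space D B) (\<lambda>b. batch_grad gL B b x)"
    and integral_batch_grad: "(\<integral>b. batch_grad gL B b x \<partial>batch_space D B) = full_grad D gL x"
proof -
  have comp: "integrable (batch_space D B) (\<lambda>b. gL (b i) x)"
    and comp_mean: "(\<integral>b. gL (b i) x \<partial>batch_space D B) = full_grad D gL x" if "i < B" for i
    using that integrable_batch_component_iff[OF D that borel_measurable_gL] integrable_gL
      integral_batch_component[OF D that borel_measurable_gL]
    by (auto simp: full_grad_def)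
  then show "integrable (batch_space D B) (\<lambda>b. batch_grad gL B b x)"
    unfolding batch_grad_def
    by (intro integrable_scaleR_right Bochner_Integration.integrable_sum) (simp add: comp)
  show "(\<integral>b. batch_grad gL B b x \<partial>batch_space D B) = full_grad D gL x"
    unfolding batch_grad_def using comp comp_mean B
    by (simp add: Bochner_Integration.integral_sum sum_constant_scaleR)
qed

lemma
  assumes B: "B > 0"
  shows integrable_norm_batch_grad_square:
      "integrable (batch_space D B) (\<lambda>b. (norm (batch_grad gL B b x))\<^sup>2)"
    and integral_norm_batch_grad_square:
      "(\<integral>b. (norm (batch_grad gL B b x))\<^sup>2 \<partial>batch_space D B)
         = (norm (full_grad D gL x))\<^sup>2 + trSigma D gL B x"
proof -
  interpret prob_space "batch_space D B" by (rule prob_space_batch_space[OF D])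
  have "(\<lambda>\<gamma>. (norm (gL \<gamma> x))\<^sup>2) \<in> borel_measurable D"
    using borel_measurable_gL by measurable
  then have "integrable (batch_space D B) (\<lambda>b. (norm (gL (b i) x))\<^sup>2)" if "i < B" for i
    using integrable_batch_component_iff[OF D that] sq_int by blast
  then have bound: "integrable (batch_space D B) (\<lambda>b. (\<Sum>i<B. (norm (gL (b i) x))\<^sup>2) / real B)"
    by (intro integrable_divide_zero Bochner_Integration.integrable_sum) simp
  have "(\<lambda>b. batch_grad gL B b x) \<in> borel_measurable (batch_space D B)"
    using borel_measurable_batch_grad[OF measurable_ident_sets[OF refl] measurable_const] by simp
  then have "(\<lambda>b. (norm (batch_grad gL B b x))\<^sup>2) \<in> borel_measurable (batch_space D B)"
    by measurable
  then show int: "integrable (batch_space D B) (\<lambda>b. (norm (batch_grad gL B b x))\<^sup>2)"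
  proof (rule Bochner_Integration.integrable_bound[OF bound _ AE_I2])
    show "norm ((norm (batch_grad gL B b x))\<^sup>2) \<le> norm ((\<Sum>i<B. (norm (gL (b i) x))\<^sup>2) / real B)"
      for b
      using norm_batch_grad_square_le[OF B, of gL b x] by (simp add: sum_nonneg)
  qed
  show "(\<integral>b. (norm (batch_grad gL B b x))\<^sup>2 \<partial>batch_space D B)
          = (norm (full_grad D gL x))\<^sup>2 + trSigma D gL B x"
    using integral_norm_square_eq_mean_plus_variance[OF integrable_batch_grad[OF B] int]
    by (simp add: trSigma_def integral_batch_grad[OF B])
qed

lemma measurable_sgd: "(\<lambda>\<omega>. sgd gL lam x0 B eta \<omega> t) \<in> borel_measurable (sgd_space D B)"
proof (induction t)
  case (Suc t)
  have "(\<lambda>\<omega>. \<omega> t) \<in> measurable (sgd_space D B) (batch_space D B)"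
    unfolding sgd_space_def by (rule measurable_component_singleton) simp
  from borel_measurable_batch_grad[OF this Suc.IH] Suc.IH show ?case by simp
qed simp

lemma
  assumes B: "B > 0"
    and int_G: "integrable (sgd_space D B)
                  (\<lambda>\<omega>. (norm (full_grad D gL (sgd gL lam x0 B eta \<omega> t)))\<^sup>2)"
    and int_N: "integrable (sgd_space D B) (\<lambda>\<omega>. trSigma D gL B (sgd gL lam x0 B eta \<omega> t))"
  shows integrable_norm_sgd_batch_grad_square:
      "integrable (sgd_space D B)
         (\<lambda>\<omega>. (norm (batch_grad gL B (\<omega> t) (sgd gL lam x0 B eta \<omega> t)))\<^sup>2)"
    and integral_norm_sgd_batch_grad_square:
      "(\<integral>\<omega>. (norm (batch_grad gL B (\<omega> t) (sgd gL lam x0 B eta \<omega> t)))\<^sup>2 \<partial>sgd_space D B)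
         = G_seq D gL lam x0 B eta t + N_seq D gL lam x0 B eta t"
proof -
  let ?x = "\<lambda>\<omega>. sgd gL lam x0 B eta \<omega> t"
  have "(\<lambda>p. batch_grad gL B (snd p) (fst p)) \<in> borel_measurable (borel \<Otimes>\<^sub>M batch_space D B)"
    by (rule borel_measurable_batch_grad[OF measurable_snd measurable_fst])
  then have f: "(\<lambda>(y, b). (norm (batch_grad gL B b y))\<^sup>2)
                  \<in> borel_measurable (borel \<Otimes>\<^sub>M batch_space D B)"
    unfolding case_prod_beta by measurable
  have fresh: "?x (s(t := b)) = ?x s" for s b
    by (rule sgd_cong) simp
  have mean: "(\<integral>b. (norm (batch_grad gL B b (?x \<omega>)))\<^sup>2 \<partial>batch_space D B)
                = (norm (full_grad D gL (?x \<omega>)))\<^sup>2 + trSigma D gL B (?x \<omega>)" for \<omega>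
    by (rule integral_norm_batch_grad_square[OF B])
  have "integrable (sgd_space D B) (\<lambda>\<omega>. \<integral>b. (norm (batch_grad gL B b (?x \<omega>)))\<^sup>2 \<partial>batch_space D B)"
    unfolding mean using int_G int_N by simp
  note fresh_coordinate = prob_space_batch_space[OF D] f zero_le_power2
    integrable_norm_batch_grad_square[OF B] measurable_sgd[unfolded sgd_space_def] fresh
    this[unfolded sgd_space_def]
  show "integrable (sgd_space D B) (\<lambda>\<omega>. (norm (batch_grad gL B (\<omega> t) (?x \<omega>)))\<^sup>2)"
    using integrable_PiM_fresh_coordinate[OF fresh_coordinate] by (simp add: sgd_space_def)
  show "(\<integral>\<omega>. (norm (batch_grad gL B (\<omega> t) (?x \<omega>)))\<^sup>2 \<partial>sgd_space D B)
          = G_seq D gL lam x0 B eta t + N_seq D gL lam x0 B eta t"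
    using integral_PiM_fresh_coordinate[OF fresh_coordinate] int_G int_N
    by (simp add: sgd_space_def[symmetric] mean G_seq_def N_seq_def)
qed

lemma R_seq_Suc:
  assumes B: "B > 0"
    and orth: "\<And>\<gamma> y. inner y (gL \<gamma> y) = 0"
    and lim: "limits_exist D gL lam x0 B eta"
  shows "R_seq D gL lam x0 B eta (Suc t)
           = (1 - eta * lam)\<^sup>2 * R_seq D gL lam x0 B eta t
             + eta\<^sup>2 * (G_seq D gL lam x0 B eta t + N_seq D gL lam x0 B eta t)"
proof -
  have int_R: "integrable (sgd_space D B) (\<lambda>\<omega>. (norm (sgd gL lam x0 B eta \<omega> t))\<^sup>2)"
    and int_G: "integrable (sgd_space D B) (\<lambda>\<omega>. (norm (full_grad D gL (sgd gL lam x0 B eta \<omega> t)))\<^sup>2)"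
    and int_N: "integrable (sgd_space D B) (\<lambda>\<omega>. trSigma D gL B (sgd gL lam x0 B eta \<omega> t))"
    using lim unfolding limits_exist_def by auto
  show ?thesis
    unfolding R_seq_def norm_sgd_Suc_square[OF orth]
    using int_R integrable_norm_sgd_batch_grad_square[OF B int_G int_N]
      integral_norm_sgd_batch_grad_square[OF B int_G int_N]
    by simp
qed

lemma steady_state_second_moment:
  assumes B: "B > 0"
    and orth: "\<And>\<gamma> y. inner y (gL \<gamma> y) = 0"
    and lim: "limits_exist D gL lam x0 B eta"
  shows "(1 - (1 - eta * lam)\<^sup>2) * R_inf D gL lam x0 B eta
           = eta\<^sup>2 * (G_inf D gL lam x0 B eta + N_inf D gL lam x0 B eta)"
proof -
  let ?R = "R_seq D gL lam x0 B eta" and ?G = "G_seq D gL lam x0 B eta"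
    and ?N = "N_seq D gL lam x0 B eta"
  have R: "?R \<longlonglongrightarrow> R_inf D gL lam x0 B eta" and G: "?G \<longlonglongrightarrow> G_inf D gL lam x0 B eta"
    and N: "?N \<longlonglongrightarrow> N_inf D gL lam x0 B eta"
    using lim unfolding limits_exist_def R_inf_def G_inf_def N_inf_def
    by (auto simp: convergent_LIMSEQ_iff)
  have "(\<lambda>t. ?R (Suc t)) \<longlonglongrightarrow> (1 - eta * lam)\<^sup>2 * R_inf D gL lam x0 B eta
          + eta\<^sup>2 * (G_inf D gL lam x0 B eta + N_inf D gL lam x0 B eta)"
    unfolding R_seq_Suc[OF B orth lim] by (intro tendsto_intros R G N)
  with LIMSEQ_Suc[OF R] show ?thesis
    by (auto dest: LIMSEQ_unique simp: algebra_simps)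
qed

end

lemma limits_exist_nonneg:
  assumes "limits_exist D gL lam x0 B eta"
  shows "0 \<le> R_inf D gL lam x0 B eta" "0 \<le> G_inf D gL lam x0 B eta"
    "0 \<le> N_inf D gL lam x0 B eta"
  using assms unfolding limits_exist_def R_inf_def G_inf_def N_inf_def
  by (auto intro!: LIMSEQ_le_const[OF convergent_LIMSEQ_iff[THEN iffD1]]
      simp: R_seq_def G_seq_def N_seq_def trSigma_def)

lemma pos_if_ratio_ge_pos:
  fixes c x y :: real
  assumes "0 < c" "0 \<le> x" "0 \<le> y" "c \<le> x / y"
  shows "0 < x" "0 < y"
  using assms by (auto simp: order.order_iff_strict)

lemma kappa_le_of_linear_scaling_bounds:
  fixes C \<kappa> eta lam R1 R2 G1 G2 N1 N2 :: real
  assumes C: "0 < C" "C < sqrt \<kappa>" and eta: "0 < eta" and lam: "0 < lam"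
    and nonneg: "0 \<le> R1" "0 \<le> R2" "0 \<le> G1" "0 \<le> G2" "0 \<le> N1" "0 \<le> N2"
    and steady1: "(1 - (1 - eta * lam)\<^sup>2) * R1 = eta\<^sup>2 * (G1 + N1)"
    and steady2: "(1 - (1 - \<kappa> * eta * lam)\<^sup>2) * R2 = (\<kappa> * eta)\<^sup>2 * (G2 + N2)"
    and R: "1 / C \<le> R1 / R2"
    and N: "1 / C \<le> N1 / (\<kappa> * N2)" "N1 / (\<kappa> * N2) \<le> C"
    and G: "1 / C \<le> G1 / G2" "G1 / G2 \<le> C"
  shows "\<kappa> \<le> C\<^sup>2 * (1 + N1 / G1)"
proof -
  have "1\<^sup>2 \<le> C\<^sup>2"
    using order_trans[OF G] C by (simp add: field_simps power2_eq_square)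
  then have "1 \<le> C"
    using C by (auto intro: power2_le_imp_le)
  have "C\<^sup>2 < (sqrt \<kappa>)\<^sup>2"
    using C by (intro power_strict_mono) auto
  then have "C\<^sup>2 < \<kappa>"
    using C by (smt (verit) real_sqrt_le_0_iff real_sqrt_pow2)
  then have \<kappa>: "1 < \<kappa>"
    using \<open>1 \<le> C\<close> by (smt (verit) one_le_power)
  have R1: "0 < R1" and R2: "0 < R2"
    using pos_if_ratio_ge_pos[OF _ nonneg(1,2) R] C by auto
  have G1: "0 < G1" and G2: "0 < G2"
    using pos_if_ratio_ge_pos[OF _ nonneg(3,4) G(1)] C by auto
  have N2: "0 < N2"
    using pos_if_ratio_ge_pos[OF _ nonneg(5) _ N(1)] C \<kappa> nonneg(6)
    by (auto simp: zero_less_mult_iff)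
  define a where "a = eta * lam"
  have "eta * (lam * (2 - a) * R1) = eta * (eta * (G1 + N1))"
    using steady1 unfolding a_def by (simp add: power2_eq_square algebra_simps)
  then have steady1': "lam * (2 - a) * R1 = eta * (G1 + N1)"
    using eta by simp
  have "(\<kappa> * eta) * (lam * (2 - \<kappa> * a) * R2) = (\<kappa> * eta) * (\<kappa> * eta * (G2 + N2))"
    using steady2 unfolding a_def by (simp add: power2_eq_square algebra_simps)
  then have steady2': "lam * (2 - \<kappa> * a) * R2 = \<kappa> * eta * (G2 + N2)"
    using eta \<kappa> by simp
  have "0 < lam * (2 - \<kappa> * a) * R2"
    unfolding steady2' using eta \<kappa> G2 nonneg(6) by simp
  then have shrink: "0 < 2 - \<kappa> * a"
    using lam R2 by (simp add: zero_less_mult_iff)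
  have "\<kappa> * G1 \<le> \<kappa> * (C * G2)"
    using G(2) G2 \<kappa> by (simp add: field_simps)
  moreover have "N1 \<le> C * (\<kappa> * N2)"
    using N(2) N2 \<kappa> by (simp add: field_simps)
  ultimately have "\<kappa> * G1 + N1 \<le> C * (\<kappa> * (G2 + N2))"
    by (simp add: algebra_simps)
  then have "eta * (\<kappa> * G1 + N1) \<le> eta * (C * (\<kappa> * (G2 + N2)))"
    using eta by simp
  also have "\<dots> = C * (lam * (2 - \<kappa> * a) * R2)"
    unfolding steady2' by (simp add: algebra_simps)
  also have "\<dots> \<le> C * (lam * (2 - \<kappa> * a) * (C * R1))"
    using R R2 C lam shrink by (intro mult_left_mono) (auto simp: field_simps)
  also have "\<dots> \<le> C * C * (lam * (2 - a) * R1)"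
    using \<kappa> C lam R1 eta unfolding a_def by (simp add: mult_left_mono mult_right_mono)
  also have "\<dots> = eta * (C\<^sup>2 * (G1 + N1))"
    unfolding steady1' by (simp add: power2_eq_square algebra_simps)
  finally have "\<kappa> * G1 \<le> C\<^sup>2 * (G1 + N1)"
    using eta nonneg(5) by simp
  then show ?thesis
    using G1 by (simp add: field_simps)
qed

theorem theorem4:
  fixes D :: "'g measure"
    and L :: "'g \<Rightarrow> 'a::euclidean_space \<Rightarrow> real"
    and gL :: "'g \<Rightarrow> 'a \<Rightarrow> 'a"
    and lam eta C \<kappa> :: real
    and x0 :: 'a
    and B Bk :: nat
  assumes D: "prob_space D"
    and scale_inv: "\<And>\<gamma> x c. x \<noteq> 0 \<Longrightarrow> c > 0 \<Longrightarrow> L \<gamma> (c *\<^sub>R x) = L \<gamma> x"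
    and grad: "\<And>\<gamma> x. x \<noteq> 0 \<Longrightarrow> GDERIV (L \<gamma>) x :> gL \<gamma> x"
    and full_grad: "\<And>x. x \<noteq> 0 \<Longrightarrow>
          GDERIV (\<lambda>y. \<integral>\<gamma>. L \<gamma> y \<partial>D) x :> full_grad D gL x"
    and meas: "(\<lambda>(\<gamma>, x). gL \<gamma> x) \<in> borel_measurable (D \<Otimes>\<^sub>M borel)"
    and sq_int: "\<And>x. integrable D (\<lambda>\<gamma>. (norm (gL \<gamma> x))\<^sup>2)"
    and lam: "lam > 0"
    and eta: "eta > 0"
    and B: "B > 0"
    and Bk: "real Bk = \<kappa> * real B"
    and lim1: "limits_exist D gL lam x0 B eta"
    and lim2: "limits_exist D gL lam x0 Bk (\<kappa> * eta)"
    and kappa: "\<kappa> > C\<^sup>2 * (1 + N_inf D gL lam x0 B eta / G_inf D gL lam x0 B eta)"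
  shows "\<not> LSI D gL lam x0 C \<kappa> B eta"
proof
  assume "LSI D gL lam x0 C \<kappa> B eta"
  then obtain Bk' where C: "0 < C" "C < sqrt \<kappa>" and "real Bk' = \<kappa> * real B"
    and bounds: "let R1 = R_inf D gL lam x0 B eta; R2 = R_inf D gL lam x0 Bk' (\<kappa> * eta);
             N1 = N_inf D gL lam x0 B eta; N2 = N_inf D gL lam x0 Bk' (\<kappa> * eta);
             G1 = G_inf D gL lam x0 B eta; G2 = G_inf D gL lam x0 Bk' (\<kappa> * eta)
         in 1 / C \<le> R1 / R2 \<and> R1 / R2 \<le> C
          \<and> 1 / C \<le> N1 / (\<kappa> * N2) \<and> N1 / (\<kappa> * N2) \<le> C
          \<and> 1 / C \<le> G1 / G2 \<and> G1 / G2 \<le> C"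
    unfolding LSI_def by blast
  moreover from this Bk have "Bk' = Bk" by simp
  ultimately have "1 / C \<le> R_inf D gL lam x0 B eta / R_inf D gL lam x0 Bk (\<kappa> * eta)"
    "1 / C \<le> N_inf D gL lam x0 B eta / (\<kappa> * N_inf D gL lam x0 Bk (\<kappa> * eta))"
    "N_inf D gL lam x0 B eta / (\<kappa> * N_inf D gL lam x0 Bk (\<kappa> * eta)) \<le> C"
    "1 / C \<le> G_inf D gL lam x0 B eta / G_inf D gL lam x0 Bk (\<kappa> * eta)"
    "G_inf D gL lam x0 B eta / G_inf D gL lam x0 Bk (\<kappa> * eta) \<le> C"
    by (simp_all add: Let_def)
  moreover have orth: "inner y (gL \<gamma> y) = 0" for \<gamma> y
    using scale_invariant_gradient_orthogonal[OF scale_inv grad] by (cases "y = 0") auto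
  moreover have "0 < \<kappa>"
    using C by (metis less_trans real_sqrt_gt_0_iff)
  with Bk B have "0 < Bk"
    by (metis of_nat_0_less_iff zero_less_mult_iff)
  ultimately have "\<kappa> \<le> C\<^sup>2 * (1 + N_inf D gL lam x0 B eta / G_inf D gL lam x0 B eta)"
    using limits_exist_nonneg[OF lim1] limits_exist_nonneg[OF lim2]
      steady_state_second_moment[OF D meas sq_int B orth lim1]
      steady_state_second_moment[OF D meas sq_int \<open>0 < Bk\<close> orth lim2]
    by (intro kappa_le_of_linear_scaling_bounds[OF C eta lam]) simp_all
  with kappa show False by simp
qed

end
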